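(* Let $\ell\ge2$ and $k\ge0$ be integers, and let $\lambda$ be an $\ell$-core with $\lambda_1=k$. Write $\mathbf{a}=(a_1,\ldots,a_\ell)=\pi_\ell^{-1}(\lambda)$ and let $(k\bmod\ell)$ denote the unique integer in $\{1,\ldots,\ell\}$ congruent to $k$ modulo $\ell$. Then \[ a_{(k\bmod\ell)}=\left\lceil \frac{k}{\ell}\right\rceil, \] i.e. $\pi_\ell^{-1}(\lambda)$ lies in the affine hyperplane $H_\ell^k=\{\mathbf{a}\in\mathbf{R}^\ell:\sum_j a_j=0,\ a_{(k\bmod\ell)}=\lceil k/\ell\rceil\}$.
   Context: A partition is an $\ell$-core if none of its hook lengths is divisible by $\ell$ (the hook length of a box is the number of boxes weakly to its right in its row plus the number strictly below it in its column). For $\mathbf{a}\in\mathbf{Z}^\ell$ with $\sum a_j=0$, let $X(\mathbf{a})=\{r\ell+(j-1):1\le j\le\ell,\ r\in\mathbf{Z},\ r\le a_j\}$ and let $\pi_\ell(\mathbf{a})$ be the partition whose nonzero parts are the positive values of $\#\{y\in\mathbf{Z}\setminus X(\mathbf{a}):y<x\}$, $x\in X(\mathbf{a})$. It is known that $\pi_\ell$ is a bijection from $\{\mathbf{a}\in\mathbf{Z}^\ell:\sum a_j=0\}$ onto the set of $\ell$-cores. $\lambda_1$ is the largest part ($0$ for the empty partition). *)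

theory Defs
  imports Complex_Main "HOL-Library.Multiset"
begin

definition is_partition :: "nat list \<Rightarrow> bool" where
  "is_partition lam \<longleftrightarrow> sorted_wrt (\<ge>) lam \<and> 0 \<notin> set lam"

definition largest_part :: "nat list \<Rightarrow> nat" where
  "largest_part lam = (if lam = [] then 0 else hd lam)"

definition col_len :: "nat list \<Rightarrow> nat \<Rightarrow> nat" where
  "col_len lam j = length (filter (\<lambda>p. j < p) lam)"

text \<open>Hook length of the box in row i, column j (both 0-indexed, j < lam!i):
  boxes weakly right in the row plus boxes strictly below in the column.\<close>
definition hook :: "nat list \<Rightarrow> nat \<Rightarrow> nat \<Rightarrow> nat" where
  "hook lam i j = (lam ! i - j) + (col_len lam j - Suc i)"

definition is_core :: "nat \<Rightarrow> nat list \<Rightarrow> bool" where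
  "is_core l lam \<longleftrightarrow> is_partition lam \<and>
     (\<forall>i < length lam. \<forall>j < lam ! i. \<not> l dvd hook lam i j)"

text \<open>Vectors a in Z^l are functions indexed by 1..l.\<close>
definition Xset :: "nat \<Rightarrow> (nat \<Rightarrow> int) \<Rightarrow> int set" where
  "Xset l a = {r * int l + (int j - 1) | j r. 1 \<le> j \<and> j \<le> l \<and> r \<le> a j}"

definition gap_count :: "nat \<Rightarrow> (nat \<Rightarrow> int) \<Rightarrow> int \<Rightarrow> nat" where
  "gap_count l a x = card {y. y \<notin> Xset l a \<and> y < x}"

definition pi_ell :: "nat \<Rightarrow> (nat \<Rightarrow> int) \<Rightarrow> nat list" where
  "pi_ell l a = rev (sorted_list_of_multiset
     (image_mset (gap_count l a) (mset_set {x \<in> Xset l a. 0 < gap_count l a x})))"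

definition mod1 :: "nat \<Rightarrow> nat \<Rightarrow> nat" where
  "mod1 k l = (if k mod l = 0 then l else k mod l)"

end

theory Submission
  imports Defs
begin

text \<open>The set \<open>X(a)\<close> has a greatest element \<open>M = a\<^sub>j \<ell> + j - 1\<close> and contains every integer
  below \<open>s \<ell>\<close>, where \<open>s = min a\<^sub>j\<close>. Gap counts are monotone, so the largest part of
  \<open>\<pi>\<^sub>\<ell>(a)\<close> is the number of gaps below \<open>M\<close>. The window \<open>[s \<ell>, M]\<close> contains
  \<open>\<Sum>\<^sub>j (a\<^sub>j - s + 1) = \<ell>(1 - s)\<close> elements of \<open>X(a)\<close> because \<open>\<Sum>\<^sub>j a\<^sub>j = 0\<close>, hence
  \<open>\<lambda>\<^sub>1 = M + 1 - \<ell> = (a\<^sub>j - 1) \<ell> + j\<close>, which gives \<open>j = (\<lambda>\<^sub>1 mod \<ell>)\<close> and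
  \<open>a\<^sub>j = \<lceil>\<lambda>\<^sub>1/\<ell>\<rceil>\<close>.\<close>

lemma Xset_iff:
  assumes "l > 0"
  shows "x \<in> Xset l a \<longleftrightarrow> x div int l \<le> a (nat (x mod int l) + 1)"
proof
  assume "x \<in> Xset l a"
  then obtain j r where j: "1 \<le> j" "j \<le> l" "r \<le> a j" "x = r * int l + (int j - 1)"
    unfolding Xset_def by auto
  then have "x div int l = r" "x mod int l = int j - 1"
    using assms by simp_all
  with j show "x div int l \<le> a (nat (x mod int l) + 1)"
    by (simp add: nat_diff_distrib')
next
  assume le: "x div int l \<le> a (nat (x mod int l) + 1)"
  have "nat (x mod int l) < l"
    using assms by (simp add: nat_less_iff)
  moreover have "x = x div int l * int l + (int (nat (x mod int l) + 1) - 1)"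
    using assms by simp
  ultimately show "x \<in> Xset l a"
    unfolding Xset_def using le
    by (intro CollectI exI[of _ "nat (x mod int l) + 1"] exI[of _ "x div int l"]) auto
qed

lemma Xset_greatest:
  assumes "l > 0"
  obtains j where "j \<in> {1..l}" "a j * int l + int j - 1 \<in> Xset l a"
    "\<And>x. x \<in> Xset l a \<Longrightarrow> x \<le> a j * int l + int j - 1"
proof -
  define f where "f j = a j * int l + int j - 1" for j
  have "Max (f ` {1..l}) \<in> f ` {1..l}"
    using assms by (intro Max_in) auto
  then obtain j where j: "j \<in> {1..l}" and max: "f j = Max (f ` {1..l})"
    by auto
  have "x \<le> f j" if "x \<in> Xset l a" for x
  proof -
    from that obtain i r where i: "i \<in> {1..l}" "r \<le> a i" "x = r * int l + (int i - 1)"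
      unfolding Xset_def by auto
    have "r * int l \<le> a i * int l"
      using i by (intro mult_right_mono) simp_all
    then have "x \<le> f i"
      using i unfolding f_def by linarith
    also have "f i \<le> f j"
      unfolding max using i by simp
    finally show ?thesis .
  qed
  moreover have "f j \<in> Xset l a"
    using j unfolding Xset_def f_def by auto
  ultimately show ?thesis
    using that j unfolding f_def by blast
qed

lemma Xset_lower:
  assumes "l > 0" and lower: "\<forall>j\<in>{1..l}. s \<le> a j" and "y < s * int l"
  shows "y \<in> Xset l a"
proof -
  define j where "j = nat (y mod int l) + 1"
  have "nat (y mod int l) < l"
    using assms(1) by (simp add: nat_less_iff)
  then have "j \<in> {1..l}"
    unfolding j_def by simp
  then have "s \<le> a j"
    using lower by blast
  moreover have "y div int l * int l < s * int l"
    using assms(3) div_mult_mod_eq[of y "int l"] pos_mod_sign[of "int l" y] assms(1)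
    by linarith
  then have "y div int l < s"
    using assms(1) by simp
  ultimately show ?thesis
    unfolding Xset_iff[OF assms(1)] j_def by simp
qed

lemma Xset_Int_atLeast:
  assumes "l > 0"
  shows "Xset l a \<inter> {s * int l..} = (\<Union>j\<in>{1..l}. (\<lambda>r. r * int l + (int j - 1)) ` {s..a j})"
proof (intro equalityI subsetI)
  fix x assume "x \<in> Xset l a \<inter> {s * int l..}"
  then obtain j r where j: "j \<in> {1..l}" "r \<le> a j" "x = r * int l + (int j - 1)"
    and "s * int l \<le> x"
    unfolding Xset_def by auto
  then have "s * int l < (r + 1) * int l"
    by (simp add: algebra_simps)
  then have "s \<le> r"
    using assms(1) by (simp add: mult_less_cancel_right)
  with j show "x \<in> (\<Union>j\<in>{1..l}. (\<lambda>r. r * int l + (int j - 1)) ` {s..a j})"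
    by (intro UN_I[of j] image_eqI[of _ _ r]) auto
next
  fix x assume "x \<in> (\<Union>j\<in>{1..l}. (\<lambda>r. r * int l + (int j - 1)) ` {s..a j})"
  then obtain j r where j: "j \<in> {1..l}" "s \<le> r" "r \<le> a j" "x = r * int l + (int j - 1)"
    by auto
  have "s * int l \<le> r * int l"
    using j(2) by (intro mult_right_mono) simp_all
  moreover have "1 \<le> int j"
    using j(1) by simp
  ultimately have "s * int l \<le> x"
    using j(4) by linarith
  moreover have "x \<in> Xset l a"
    using j unfolding Xset_def by auto
  ultimately show "x \<in> Xset l a \<inter> {s * int l..}"
    by simp
qed

lemma card_Xset_Int_atLeast:
  assumes "l > 0" and lower: "\<forall>j\<in>{1..l}. s \<le> a j"
  shows "int (card (Xset l a \<inter> {s * int l..})) = (\<Sum>j = 1..l. a j - s + 1)"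
proof -
  define h where "h j r = r * int l + (int j - 1)" for j r
  have inj: "inj_on (h j) A" for j A
    unfolding h_def inj_on_def using assms(1) by auto
  have disjoint: "h i ` {s..a i} \<inter> h j ` {s..a j} = {}"
    if "i \<in> {1..l}" "j \<in> {1..l}" "i \<noteq> j" for i j
  proof (rule ccontr)
    assume "h i ` {s..a i} \<inter> h j ` {s..a j} \<noteq> {}"
    then obtain r r' where "h i r = h j r'"
      by auto
    then have "h i r mod int l = h j r' mod int l"
      by simp
    with that show False
      unfolding h_def by simp
  qed
  have union: "Xset l a \<inter> {s * int l..} = (\<Union>j\<in>{1..l}. h j ` {s..a j})"
    using Xset_Int_atLeast[OF assms(1)] by (simp add: h_def)
  have "card (Xset l a \<inter> {s * int l..}) = (\<Sum>j = 1..l. card (h j ` {s..a j}))"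
    unfolding union by (rule card_UN_disjoint) (use disjoint in auto)
  also have "\<dots> = (\<Sum>j = 1..l. nat (a j - s + 1))"
    by (simp add: card_image[OF inj])
  finally have "int (card (Xset l a \<inter> {s * int l..})) = (\<Sum>j = 1..l. int (nat (a j - s + 1)))"
    by simp
  also have "\<dots> = (\<Sum>j = 1..l. a j - s + 1)"
    using lower by (intro sum.cong) auto
  finally show ?thesis .
qed

lemma gap_count_eq_card_diff:
  assumes "l > 0" and "\<forall>j\<in>{1..l}. s \<le> a j"
  shows "gap_count l a x = card ({s * int l..<x} - Xset l a)"
proof -
  have "{y. y \<notin> Xset l a \<and> y < x} = {s * int l..<x} - Xset l a"
    using Xset_lower[OF assms] by (auto simp: not_less[symmetric])
  then show ?thesis
    unfolding gap_count_def by simp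
qed

lemma ex_lower_bound_atLeastAtMost:
  fixes a :: "nat \<Rightarrow> int"
  obtains s where "\<forall>j\<in>{1..l}. s \<le> a j"
  using Min_le[of "a ` {1..l}"] by blast

lemma gap_count_mono:
  assumes "l > 0" and "x \<le> x'"
  shows "gap_count l a x \<le> gap_count l a x'"
proof -
  obtain s where lower: "\<forall>j\<in>{1..l}. s \<le> a j"
    using ex_lower_bound_atLeastAtMost[of l a] by blast
  show ?thesis
    unfolding gap_count_eq_card_diff[OF assms(1) lower]
    using assms(2) by (intro card_mono) auto
qed

lemma gap_count_eq_0:
  assumes "l > 0" and "\<forall>j\<in>{1..l}. s \<le> a j" and "x \<le> s * int l"
  shows "gap_count l a x = 0"
  unfolding gap_count_eq_card_diff[OF assms(1,2)] using assms(3) by simp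

lemma gap_count_greatest:
  assumes "l > 0" and sum0: "(\<Sum>j = 1..l. a j) = 0"
    and M: "M \<in> Xset l a" "\<And>x. x \<in> Xset l a \<Longrightarrow> x \<le> M"
  shows "int (gap_count l a M) = M + 1 - int l"
proof -
  obtain s where lower: "\<forall>j\<in>{1..l}. s \<le> a j"
    using ex_lower_bound_atLeastAtMost[of l a] by blast
  define W where "W = Xset l a \<inter> {s * int l..}"
  have "a 1 * int l \<in> Xset l a"
    using assms(1) unfolding Xset_def by (intro CollectI exI[of _ 1] exI[of _ "a 1"]) simp
  then have "a 1 * int l \<le> M"
    by (rule M(2))
  moreover have "s * int l \<le> a 1 * int l"
    using lower assms(1) by (intro mult_right_mono) auto
  ultimately have "s * int l \<le> M"
    by linarith
  then have "M \<in> W" "W - {M} \<subseteq> {s * int l..<M}" and finW: "finite W"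
    using M unfolding W_def by (auto intro: finite_subset[of _ "{s * int l..M}"] antisym)
  moreover have "{s * int l..<M} - Xset l a = {s * int l..<M} - (W - {M})"
    unfolding W_def by auto
  ultimately have "gap_count l a M = card {s * int l..<M} - (card W - 1)"
    unfolding gap_count_eq_card_diff[OF assms(1) lower]
    by (simp add: card_Diff_subset)
  moreover have "card W - 1 \<le> card {s * int l..<M}"
    using \<open>M \<in> W\<close> \<open>W - {M} \<subseteq> _\<close> finW card_mono[of "{s * int l..<M}" "W - {M}"] by simp
  moreover have "int (card W) = int l * (1 - s)"
    using card_Xset_Int_atLeast[OF assms(1) lower] sum0
    unfolding W_def by (simp add: sum.distrib sum_subtractf algebra_simps)
  moreover have "card W \<ge> 1"
    using \<open>M \<in> W\<close> finW by (metis One_nat_def Suc_leI card_gt_0_iff empty_iff)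
  ultimately show ?thesis
    using \<open>s * int l \<le> M\<close> by (simp add: of_nat_diff algebra_simps)
qed

lemma sorted_le_last: "sorted ys \<Longrightarrow> y \<in> set ys \<Longrightarrow> y \<le> last ys"
  by (induction ys) (auto simp: last_in_set)

lemma largest_part_pi_ell:
  assumes "l > 0" and M: "M \<in> Xset l a" "\<And>x. x \<in> Xset l a \<Longrightarrow> x \<le> M"
  shows "largest_part (pi_ell l a) = gap_count l a M"
proof -
  define g where "g = gap_count l a"
  define S where "S = {x \<in> Xset l a. 0 < g x}"
  define ys where "ys = sorted_list_of_multiset (image_mset g (mset_set S))"
  obtain s where lower: "\<forall>j\<in>{1..l}. s \<le> a j"
    using ex_lower_bound_atLeastAtMost[of l a] by blast
  have "S \<subseteq> {s * int l..M}"
  proof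
    fix x assume "x \<in> S"
    then have "x \<in> Xset l a" "\<not> x \<le> s * int l"
      using gap_count_eq_0[OF assms(1) lower] unfolding S_def g_def by auto
    then show "x \<in> {s * int l..M}"
      using M(2) by simp
  qed
  then have set_ys: "set ys = g ` S"
    unfolding ys_def by (simp add: finite_subset)
  have ys_le: "y \<le> g M" if "y \<in> set ys" for y
    using that M(2) gap_count_mono[OF assms(1)] unfolding set_ys S_def g_def by auto
  have "largest_part (rev ys) = g M"
  proof (cases "ys = []")
    case True
    then have "g M = 0"
      using set_ys M(1) unfolding S_def by auto
    with True show ?thesis
      unfolding largest_part_def by simp
  next
    case False
    have "g M \<le> last ys"
      using M(1) set_ys sorted_le_last[of ys "g M"] unfolding S_def ys_def
      by (cases "g M = 0") auto
    with False ys_le[of "last ys"] show ?thesis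
      unfolding largest_part_def by (simp add: hd_rev)
  qed
  then show ?thesis
    unfolding pi_ell_def ys_def S_def g_def gap_count_def by simp
qed

lemma mod1_eq:
  assumes "j \<in> {1..l}" and "int k = c * int l + int j"
  shows "mod1 k l = j"
proof -
  have "int (k mod l) = int j mod int l"
    using assms(2) by (simp add: zmod_int)
  with assms(1) show ?thesis
    unfolding mod1_def by (cases "j = l") auto
qed

lemma ceiling_divide_eq:
  assumes "j \<in> {1..l}" and "int k = c * int l + int j"
  shows "\<lceil>real k / real l\<rceil> = c + 1"
proof -
  have "real k = of_int c * real l + real j"
    using arg_cong[OF assms(2), of real_of_int] by simp
  then have "real k / real l = real j / real l + of_int c"
    using assms(1) by (simp add: field_simps)
  moreover have "\<lceil>real j / real l\<rceil> = 1"
    using assms(1) by (simp add: ceiling_eq_iff field_simps)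
  ultimately show ?thesis
    by simp
qed

theorem mainTheorem8:
  fixes l k :: nat and lam :: "nat list" and a :: "nat \<Rightarrow> int"
  assumes "l \<ge> 2"
    and "is_core l lam"
    and "largest_part lam = k"
    and "(\<Sum>j = 1..l. a j) = 0"
    and "pi_ell l a = lam"
  shows "a (mod1 k l) = \<lceil>real k / real l\<rceil>"
proof -
  have "l > 0"
    using assms(1) by simp
  then obtain j where j: "j \<in> {1..l}" and M: "a j * int l + int j - 1 \<in> Xset l a"
    "\<And>x. x \<in> Xset l a \<Longrightarrow> x \<le> a j * int l + int j - 1"
    using Xset_greatest[OF \<open>l > 0\<close>, where a = a] by metis
  have "k = gap_count l a (a j * int l + int j - 1)"
    using largest_part_pi_ell[OF \<open>l > 0\<close> M] assms(3,5) by simp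
  then have "int k = (a j - 1) * int l + int j"
    using gap_count_greatest[OF \<open>l > 0\<close> assms(4) M] by (simp add: algebra_simps)
  then show ?thesis
    using mod1_eq[OF j] ceiling_divide_eq[OF j] by (metis diff_add_cancel)
qed

end
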